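(* Suppose $\alpha\ge\beta$. Let $(n^{-*},n^{+*})$ be a global optimum of $\max\{\Phi_{w_{\min}}(n^-,n^+): n^-,n^+\in\mathbb{N}\cup\{0\},\ n^-+n^+=N\}$ and suppose the optimal value is positive. Then every global optimum $(w^{-*},w^{+*})$ of $P_{w_{\min}}(n^{-*},n^{+*})$ satisfies $w^{-*}_i=w_{\min}$ for all $i\in\{1,\dots,n^{-*}\}$.
   Context: Lottery with $N\in\mathbb{N}$ tickets, each outcome having probability $1/N$, and a fixed ticket price $-w_{\min}>0$. Parameters $\alpha,\beta\in(0,1)$, $\lambda>0$; value function $U(x)=x^\alpha$ for $x\ge0$, $U(x)=-\lambda(-x)^\beta$ for $x<0$. A function $f:[0,1]\to\mathbb{R}$ is inverse S-shaped if it is strictly increasing, continuously differentiable, and there is $x_0\in[0,1]$ such that $f'$ is strictly decreasing on $[0,x_0]$ and strictly increasing on $[x_0,1]$; $W^+,W^-:[0,1]\to[0,1]$ are inverse S-shaped with value $0$ at $0$ and $1$ at $1$. For $n^-+n^+=N$ let $h^-_i=W^-(i/N)-W^-((i-1)/N)$ ($i\le n^-$), $h^+_j=W^+((n^+-j+1)/N)-W^+((n^+-j)/N)$ ($j\le n^+$). Problem $P_{w_{\min}}(n^-,n^+)$: maximize $\sum_{i=1}^{n^-}(-w^-_i)-\sum_{j=1}^{n^+}w^+_j$ subject to $\sum_ih^-_iU(w^-_i)+\sum_jh^+_jU(w^+_j)\ge0$, $0\le w^+_1\le\cdots\le w^+_{n^+}$, $w_{\min}\le w^-_1\le\cdots\le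 w^-_{n^-}\le0$; $\Phi_{w_{\min}}(n^-,n^+)$ is its optimal value (zero when $n^-=0$ or $n^+=0$). *)

theory Defs
  imports "HOL-Analysis.Analysis"
begin

definition U :: "real \<Rightarrow> real \<Rightarrow> real \<Rightarrow> real \<Rightarrow> real" where
  "U alpha beta lam x = (if x \<ge> 0 then x powr alpha else - lam * ((- x) powr beta))"

definition inverse_S_shaped :: "(real \<Rightarrow> real) \<Rightarrow> bool" where
  "inverse_S_shaped f \<longleftrightarrow>
     strict_mono_on {0..1} f \<and>
     (\<exists>f'. (\<forall>x\<in>{0..1}. (f has_real_derivative f' x) (at x within {0..1})) \<and>
           continuous_on {0..1} f' \<and>
           (\<exists>x0\<in>{0..1}.
              (\<forall>x y. x \<in> {0..x0} \<and> y \<in> {0..x0} \<and> x < y \<longrightarrow> f' y < f' x) \<and>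
              (\<forall>x y. x \<in> {x0..1} \<and> y \<in> {x0..1} \<and> x < y \<longrightarrow> f' x < f' y)))"

definition h_minus :: "(real \<Rightarrow> real) \<Rightarrow> nat \<Rightarrow> nat \<Rightarrow> real" where
  "h_minus Wm N i = Wm (real i / real N) - Wm ((real i - 1) / real N)"

definition h_plus :: "(real \<Rightarrow> real) \<Rightarrow> nat \<Rightarrow> nat \<Rightarrow> nat \<Rightarrow> real" where
  "h_plus Wp N np j = Wp ((real np - real j + 1) / real N) - Wp ((real np - real j) / real N)"

text \<open>Objective of P_wmin(n-,n+); vectors are functions on indices 1..n.\<close>
definition objective :: "nat \<Rightarrow> nat \<Rightarrow> (nat \<Rightarrow> real) \<Rightarrow> (nat \<Rightarrow> real) \<Rightarrow> real" where
  "objective nm np wm wp = (\<Sum>i=1..nm. - wm i) - (\<Sum>j=1..np. wp j)"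

definition feasible ::
  "real \<Rightarrow> real \<Rightarrow> real \<Rightarrow> (real \<Rightarrow> real) \<Rightarrow> (real \<Rightarrow> real) \<Rightarrow> nat \<Rightarrow> real
    \<Rightarrow> nat \<Rightarrow> nat \<Rightarrow> (nat \<Rightarrow> real) \<Rightarrow> (nat \<Rightarrow> real) \<Rightarrow> bool" where
  "feasible alpha beta lam Wm Wp N wmin nm np wm wp \<longleftrightarrow>
     (\<Sum>i=1..nm. h_minus Wm N i * U alpha beta lam (wm i))
       + (\<Sum>j=1..np. h_plus Wp N np j * U alpha beta lam (wp j)) \<ge> 0 \<and>
     (\<forall>j\<in>{1..np}. 0 \<le> wp j) \<and> (\<forall>j\<in>{1..<np}. wp j \<le> wp (j + 1)) \<and>
     (\<forall>i\<in>{1..nm}. wmin \<le> wm i \<and> wm i \<le> 0) \<and> (\<forall>i\<in>{1..<nm}. wm i \<le> wm (i + 1))"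

definition is_optimum ::
  "real \<Rightarrow> real \<Rightarrow> real \<Rightarrow> (real \<Rightarrow> real) \<Rightarrow> (real \<Rightarrow> real) \<Rightarrow> nat \<Rightarrow> real
    \<Rightarrow> nat \<Rightarrow> nat \<Rightarrow> (nat \<Rightarrow> real) \<Rightarrow> (nat \<Rightarrow> real) \<Rightarrow> bool" where
  "is_optimum alpha beta lam Wm Wp N wmin nm np wm wp \<longleftrightarrow>
     feasible alpha beta lam Wm Wp N wmin nm np wm wp \<and>
     (\<forall>vm vp. feasible alpha beta lam Wm Wp N wmin nm np vm vp \<longrightarrow>
        objective nm np vm vp \<le> objective nm np wm wp)"

definition Phi ::
  "real \<Rightarrow> real \<Rightarrow> real \<Rightarrow> (real \<Rightarrow> real) \<Rightarrow> (real \<Rightarrow> real) \<Rightarrow> nat \<Rightarrow> real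
    \<Rightarrow> nat \<Rightarrow> nat \<Rightarrow> real" where
  "Phi alpha beta lam Wm Wp N wmin nm np =
     (if nm = 0 \<or> np = 0 then 0
      else Sup {objective nm np wm wp | wm wp. feasible alpha beta lam Wm Wp N wmin nm np wm wp})"

end

theory Submission
  imports Defs
begin

(*
  Split an optimal loss vector into its floor part (the entries equal to wmin, all other entries
  replaced by 0) and the remaining losses, which lie strictly above wmin.  Stretching the remaining
  losses by a factor T and scaling the gains by T - (T - 1) u moves along a line on which the
  objective is affine.  Here u is chosen so that the point T = 0 (floor losses only) is exactly
  feasible; for T slightly above 1 feasibility follows from beta <= alpha and the concavity of
  x powr alpha.  Since the optimum is the interior point T = 1 of this segment, the endpoint T = 0
  is optimal as well.  There the last loss is 0, and since the optimal value is positive some loss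
  equals wmin.  Selling the zero-loss ticket as a zero gain instead is feasible for
  (n- - 1, n+ + 1) with the same objective, and a zero gain can be strictly improved because
  U has infinite slope at 0, contradicting the optimality of (n-, n+).
*)

lemma U_zero [simp]: "U a b l 0 = 0"
  by (simp add: U_def)

lemma U_nonneg: "0 \<le> x \<Longrightarrow> 0 \<le> U a b l x"
  by (simp add: U_def)

lemma U_nonpos: "0 \<le> l \<Longrightarrow> x \<le> 0 \<Longrightarrow> U a b l x \<le> 0"
  by (simp add: U_def)

lemma U_neg: "0 < l \<Longrightarrow> x < 0 \<Longrightarrow> U a b l x < 0"
  by (simp add: U_def)

lemma U_mono_nonneg: "0 < a \<Longrightarrow> 0 \<le> x \<Longrightarrow> x \<le> y \<Longrightarrow> U a b l x \<le> U a b l y"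
  by (simp add: U_def powr_mono2)

lemma U_mult_nonneg: "0 \<le> c \<Longrightarrow> 0 \<le> x \<Longrightarrow> U a b l (c * x) = c powr a * U a b l x"
  by (simp add: U_def powr_mult)

lemma U_mult_nonpos:
  assumes "0 \<le> c" "x \<le> 0"
  shows "U a b l (c * x) = c powr b * U a b l x"
proof (cases "c = 0 \<or> x = 0")
  case False
  with assms have "c * x < 0" "x < 0"
    by (auto simp: mult_pos_neg)
  with assms show ?thesis
    using powr_mult[of c "- x" b] by (simp add: U_def)
qed auto

lemma U_mult_ge:
  assumes "0 \<le> a" "a \<le> 1" "0 \<le> s" "s \<le> 1" "0 \<le> x"
  shows "s * U a b l x \<le> U a b l (s * x)"
proof -
  have "s \<le> s powr a"
    using powr_mono'[of a 1 s] assms by simp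
  then have "s * U a b l x \<le> s powr a * U a b l x"
    using assms by (intro mult_right_mono U_nonneg)
  then show ?thesis
    using assms by (simp add: U_mult_nonneg)
qed

lemma h_minus_pos:
  assumes "strict_mono_on {0..1} W" "1 \<le> i" "i \<le> N"
  shows "0 < h_minus W N i"
  using strict_mono_onD[OF assms(1), of "(real i - 1) / N" "real i / N"] assms(2,3)
  by (simp add: h_minus_def divide_strict_right_mono)

lemma h_plus_pos:
  assumes "strict_mono_on {0..1} W" "1 \<le> j" "j \<le> np" "np \<le> N"
  shows "0 < h_plus W N np j"
  using strict_mono_onD[OF assms(1), of "(real np - j) / N" "(real np - j + 1) / N"] assms(2-4)
  by (simp add: h_plus_def divide_strict_right_mono)

lemma h_plus_Suc [simp]: "h_plus W N (Suc np) (Suc j) = h_plus W N np j"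
  by (simp add: h_plus_def)

lemma objective_linear:
  "objective nm np (\<lambda>i. s * x i + t * y i) (\<lambda>j. s * p j + t * q j)
     = s * objective nm np x p + t * objective nm np y q"
proof -
  have "(\<Sum>i=1..nm. - (s * x i + t * y i)) = s * (\<Sum>i=1..nm. - x i) + t * (\<Sum>i=1..nm. - y i)"
    by (simp add: sum_subtractf sum_negf sum_distrib_left)
  then show ?thesis
    by (simp add: objective_def sum.distrib sum_distrib_left algebra_simps)
qed

lemma objective_le_Phi:
  assumes "feasible alpha beta lam Wm Wp N wmin nm np wm wp" "nm \<noteq> 0" "np \<noteq> 0"
  shows "objective nm np wm wp \<le> Phi alpha beta lam Wm Wp N wmin nm np"
proof -
  have "objective nm np vm vp \<le> real nm * - wmin"
    if "feasible alpha beta lam Wm Wp N wmin nm np vm vp" for vm vp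
  proof -
    have "(\<Sum>i=1..nm. - vm i) \<le> (\<Sum>i=1..nm. - wmin)" "0 \<le> (\<Sum>j=1..np. vp j)"
      using that unfolding feasible_def by (intro sum_mono sum_nonneg; force)+
    then show ?thesis
      by (simp add: objective_def)
  qed
  then have "bdd_above {objective nm np vm vp | vm vp. feasible alpha beta lam Wm Wp N wmin nm np vm vp}"
    by (intro bdd_aboveI[where M = "real nm * - wmin"]) auto
  with assms show ?thesis
    by (auto simp: Phi_def intro!: cSup_upper)
qed

lemma Phi_eq_objective:
  assumes "is_optimum alpha beta lam Wm Wp N wmin nm np wm wp" "nm \<noteq> 0" "np \<noteq> 0"
  shows "Phi alpha beta lam Wm Wp N wmin nm np = objective nm np wm wp"
  using assms unfolding Phi_def is_optimum_def
  by (auto intro!: cSup_eq_maximum)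

lemma powr_concave: "0 \<le> a \<Longrightarrow> a \<le> 1 \<Longrightarrow> concave_on {0<..} (\<lambda>x::real. x powr a)"
  by (intro f''_le0_imp_concave derivative_eq_intros | simp add: mult_nonpos_nonneg)+

lemma powr_mix_le:
  fixes alpha beta u T :: real
  assumes "0 \<le> alpha" "alpha \<le> 1" "beta \<le> alpha" "0 \<le> u" "u \<le> 1" "1 \<le> T"
  shows "u powr alpha + T powr beta * (1 - u powr alpha) \<le> (T - (T - 1) * u) powr alpha"
proof -
  have "u powr alpha \<le> 1"
    using assms powr_mono2[of alpha u 1] by simp
  moreover have "T powr beta \<le> T powr alpha"
    using assms by (intro powr_mono) auto
  ultimately have "u powr alpha + T powr beta * (1 - u powr alpha)
      \<le> u powr alpha + T powr alpha * (1 - u powr alpha)"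
    by (intro add_left_mono mult_right_mono) auto
  also have "\<dots> \<le> u + T powr alpha * (1 - u)"
  proof -
    have "u \<le> u powr alpha"
      using powr_mono'[of alpha 1 u] assms by simp
    moreover have "1 \<le> T powr alpha"
      using assms by (intro ge_one_powr_ge_zero) auto
    ultimately have "(u powr alpha - u) * (1 - T powr alpha) \<le> 0"
      by (intro mult_nonneg_nonpos) auto
    then show ?thesis
      by (simp add: algebra_simps)
  qed
  also have "\<dots> \<le> (u * 1 + (1 - u) * T) powr alpha"
    using concave_onD[OF powr_concave, of alpha "1 - u" 1 T] assms by (simp add: algebra_simps)
  finally show ?thesis
    by (simp add: algebra_simps)
qed

lemma exists_powr_mult_eq:
  fixes a y G :: real
  assumes "0 < a" "0 \<le> y" "y \<le> G"
  obtains u where "0 \<le> u" "u \<le> 1" "u powr a * G = y"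
proof (cases "G = 0")
  case True
  with assms show ?thesis
    using that[of 0] by simp
next
  case False
  define u where "u = (y / G) powr (1 / a)"
  have "y / G \<le> 1"
    using assms False by simp
  then have "u \<le> 1"
    using assms powr_mono2[of "1 / a" "y / G" 1] by (simp add: u_def)
  moreover have "u powr a * G = y"
    using assms False by (simp add: u_def powr_powr)
  ultimately show ?thesis
    by (intro that[of u]) (simp_all add: u_def)
qed

lemma exists_powr_dominating:
  fixes a c k :: real
  assumes "0 < a" "a < 1" "0 < c" "0 < k"
  obtains e where "0 < e" "e powr a \<le> c" "e < k * e powr a"
proof -
  have pos: "\<forall>\<^sub>F e in at_right (0::real). 0 < e"
    by (rule eventually_at_right_less)
  have lim: "((\<lambda>e. e powr b) \<longlongrightarrow> 0) (at_right 0)" if "0 < b" for b :: real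
    using pos that by (intro tendsto_zero_powrI tendsto_ident_at tendsto_const) (auto elim: eventually_mono)
  have "\<forall>\<^sub>F e in at_right 0. 0 < e \<and> e powr a < c \<and> e powr (1 - a) < k"
    using pos order_tendstoD(2)[OF lim[of a]] order_tendstoD(2)[OF lim[of "1 - a"]] assms
    by (intro eventually_conj) auto
  then obtain e where e: "0 < e" "e powr a < c" "e powr (1 - a) < k"
    using eventually_happens'[OF trivial_limit_at_right_real] by blast
  then have "e = e powr a * e powr (1 - a)"
    by (simp flip: powr_add)
  also have "\<dots> < e powr a * k"
    using e by simp
  finally show ?thesis
    using that e by (simp add: mult.commute)
qed

lemma exists_stretch_factor:
  fixes x :: "'a \<Rightarrow> real"
  assumes "finite I" "\<forall>i\<in>I. c < x i"
  obtains T where "1 < T" "\<forall>i\<in>I. c < T * x i"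
proof -
  have "((\<lambda>T. T * x i) \<longlongrightarrow> x i) (at_right 1)" for i
    using tendsto_mult_right[OF tendsto_ident_at[of 1 "{1<..}"], of "x i"] by simp
  then have "\<forall>i\<in>I. \<forall>\<^sub>F T in at_right 1. c < T * x i"
    using assms(2) order_tendstoD(1) by blast
  then have "\<forall>\<^sub>F T in at_right 1. 1 < T \<and> (\<forall>i\<in>I. c < T * x i)"
    using assms(1) by (intro eventually_conj eventually_at_right_less eventually_ball_finite)
  then show ?thesis
    using that eventually_happens'[OF trivial_limit_at_right_real] by blast
qed

lemma sum_atLeast1_atMost_Suc:
  "(\<Sum>j=1..Suc n. f j) = f 1 + (\<Sum>j=1..n. f (Suc j))"
  by (simp only: One_nat_def sum.atLeast1_atMost_eq sum.lessThan_Suc_shift)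

definition loss_profile :: "real \<Rightarrow> nat \<Rightarrow> (nat \<Rightarrow> real) \<Rightarrow> bool" where
  "loss_profile wmin nm wm \<longleftrightarrow>
     (\<forall>i\<in>{1..nm}. wmin \<le> wm i \<and> wm i \<le> 0) \<and> (\<forall>i\<in>{1..<nm}. wm i \<le> wm (i + 1))"

definition gain_profile :: "nat \<Rightarrow> (nat \<Rightarrow> real) \<Rightarrow> bool" where
  "gain_profile np wp \<longleftrightarrow> (\<forall>j\<in>{1..np}. 0 \<le> wp j) \<and> (\<forall>j\<in>{1..<np}. wp j \<le> wp (j + 1))"

(* For T = 0 this is the floor part of wm: the losses at wmin are kept, all others become 0. *)
definition stretch_losses :: "real \<Rightarrow> real \<Rightarrow> (nat \<Rightarrow> real) \<Rightarrow> nat \<Rightarrow> real" where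
  "stretch_losses wmin T wm i = (if wm i = wmin then wmin else T * wm i)"

lemma stretch_losses_affine:
  "stretch_losses wmin T wm = (\<lambda>i. (1 - T) * stretch_losses wmin 0 wm i + T * wm i)"
  by (simp add: fun_eq_iff stretch_losses_def algebra_simps)

(* A new smallest gain 0 in slot 1; by h_plus_Suc the old gains keep their decision weights. *)
definition prepend_zero :: "(nat \<Rightarrow> real) \<Rightarrow> nat \<Rightarrow> real" where
  "prepend_zero v j = (if j = 1 then 0 else v (j - 1))"

lemma loss_profile_mono:
  assumes "loss_profile wmin nm wm" "1 \<le> i" "i \<le> j" "j \<le> nm"
  shows "wm i \<le> wm j"
  using assms(3)
proof (induction j rule: dec_induct)
  case (step n)
  then have "wm n \<le> wm (Suc n)"
    using assms by (auto simp: loss_profile_def)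
  with step show ?case
    by simp
qed simp

lemma loss_profile_Suc: "loss_profile wmin (Suc m) wm \<Longrightarrow> loss_profile wmin m wm"
  by (auto simp: loss_profile_def)

lemma loss_profile_stretch:
  assumes wm: "loss_profile wmin nm wm" and "0 \<le> T"
    and stretch_ok: "\<forall>i\<in>{1..nm}. wm i \<noteq> wmin \<longrightarrow> wmin \<le> T * wm i"
  shows "loss_profile wmin nm (stretch_losses wmin T wm)"
proof -
  have range: "wmin \<le> stretch_losses wmin T wm i \<and> stretch_losses wmin T wm i \<le> 0"
    if "i \<in> {1..nm}" for i
    using that wm stretch_ok \<open>0 \<le> T\<close>
    by (auto simp: loss_profile_def stretch_losses_def mult_nonneg_nonpos)
  have "stretch_losses wmin T wm i \<le> stretch_losses wmin T wm (i + 1)" if i: "i \<in> {1..<nm}" for i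
  proof (cases "wm i = wmin")
    case True
    then show ?thesis
      using range[of "i + 1"] i by (simp add: stretch_losses_def)
  next
    case False
    moreover have "wmin \<le> wm i" "wm i \<le> wm (i + 1)"
      using wm i by (auto simp: loss_profile_def)
    ultimately show ?thesis
      using \<open>0 \<le> T\<close> by (auto simp: stretch_losses_def mult_left_mono)
  qed
  with range show ?thesis
    by (simp add: loss_profile_def)
qed

lemma loss_profile_stretchable:
  assumes "loss_profile wmin nm wm"
  obtains T where "1 < T" "\<forall>i\<in>{1..nm}. wm i \<noteq> wmin \<longrightarrow> wmin \<le> T * wm i"
proof -
  have "\<forall>i\<in>{i\<in>{1..nm}. wm i \<noteq> wmin}. wmin < wm i"
    using assms by (force simp: loss_profile_def)
  then obtain T where "1 < T" "\<forall>i\<in>{i\<in>{1..nm}. wm i \<noteq> wmin}. wmin < T * wm i"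
    using exists_stretch_factor[of "{i\<in>{1..nm}. wm i \<noteq> wmin}" wmin wm] by auto
  with that show ?thesis
    by force
qed

lemma gain_profile_mult: "gain_profile np wp \<Longrightarrow> 0 \<le> c \<Longrightarrow> gain_profile np (\<lambda>j. c * wp j)"
  by (auto simp: gain_profile_def mult_left_mono)

lemma gain_profile_max_scaled:
  assumes "gain_profile np v" "0 \<le> e" "d \<le> 1"
  shows "gain_profile np (\<lambda>j. max e ((1 - d) * v j))"
  unfolding gain_profile_def
proof (intro conjI ballI)
  show "0 \<le> max e ((1 - d) * v j)" for j
    using assms by simp
  show "max e ((1 - d) * v j) \<le> max e ((1 - d) * v (j + 1))" if "j \<in> {1..<np}" for j
    using that assms by (intro max.mono mult_left_mono) (auto simp: gain_profile_def)
qed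

lemma gain_profile_prepend_zero:
  assumes "gain_profile np wp"
  shows "gain_profile (Suc np) (prepend_zero wp)"
proof -
  have "0 \<le> prepend_zero wp j" if "j \<in> {1..Suc np}" for j
    using that assms by (cases j) (auto simp: gain_profile_def prepend_zero_def)
  moreover have "prepend_zero wp j \<le> prepend_zero wp (j + 1)" if "j \<in> {1..<Suc np}" for j
    using that assms by (cases j) (auto simp: gain_profile_def prepend_zero_def)
  ultimately show ?thesis
    by (simp add: gain_profile_def)
qed

lemma objective_prepend_zero:
  assumes "wm (Suc m) = 0"
  shows "objective m (Suc np) wm (prepend_zero wp) = objective (Suc m) np wm wp"
proof -
  have "(\<Sum>j=1..Suc np. prepend_zero wp j) = (\<Sum>j=1..np. wp j)"
    by (simp only: sum_atLeast1_atMost_Suc) (simp add: prepend_zero_def)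
  with assms show ?thesis
    by (simp add: objective_def)
qed

lemma sum_max_scaled_le:
  assumes "\<forall>j\<in>{1..n}. 0 \<le> v j" "0 \<le> e" "d \<le> 1"
  shows "(\<Sum>j=1..n. max e ((1 - d) * v j)) \<le> real n * e + (1 - d) * (\<Sum>j=1..n. v j)"
proof -
  have "(\<Sum>j=1..n. max e ((1 - d) * v j)) \<le> (\<Sum>j=1..n. e + (1 - d) * v j)"
    using assms by (intro sum_mono) auto
  then show ?thesis
    by (simp add: sum.distrib sum_distrib_left)
qed

locale prospect_lottery =
  fixes alpha beta lam :: real and Wm Wp :: "real \<Rightarrow> real" and N :: nat and wmin :: real
  assumes alpha_pos: "0 < alpha" and alpha_lt_1: "alpha < 1" and lam_pos: "0 < lam"
    and Wm_mono: "strict_mono_on {0..1} Wm" and Wp_mono: "strict_mono_on {0..1} Wp"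
    and wmin_neg: "wmin < 0"
begin

abbreviation feasible_at where "feasible_at \<equiv> feasible alpha beta lam Wm Wp N wmin"

definition loss_value :: "nat \<Rightarrow> (nat \<Rightarrow> real) \<Rightarrow> real" where
  "loss_value nm wm = (\<Sum>i=1..nm. h_minus Wm N i * U alpha beta lam (wm i))"

definition gain_value :: "nat \<Rightarrow> (nat \<Rightarrow> real) \<Rightarrow> real" where
  "gain_value np wp = (\<Sum>j=1..np. h_plus Wp N np j * U alpha beta lam (wp j))"

lemma feasible_iff:
  "feasible_at nm np wm wp \<longleftrightarrow>
     0 \<le> loss_value nm wm + gain_value np wp \<and> loss_profile wmin nm wm \<and> gain_profile np wp"
  by (auto simp: feasible_def loss_value_def gain_value_def loss_profile_def gain_profile_def)

lemma loss_value_nonpos: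
  "loss_profile wmin nm wm \<Longrightarrow> nm \<le> N \<Longrightarrow> loss_value nm wm \<le> 0"
  unfolding loss_value_def loss_profile_def
  by (intro sum_nonpos mult_nonneg_nonpos less_imp_le[OF h_minus_pos[OF Wm_mono]] U_nonpos)
    (use lam_pos in auto)

lemma loss_value_neg:
  assumes "loss_profile wmin nm wm" "nm \<le> N" "i \<in> {1..nm}" "wm i < 0"
  shows "loss_value nm wm < 0"
proof -
  have "0 < (\<Sum>i=1..nm. - (h_minus Wm N i * U alpha beta lam (wm i)))"
  proof (rule sum_pos2[OF _ assms(3)])
    show "0 < - (h_minus Wm N i * U alpha beta lam (wm i))"
      using assms h_minus_pos[OF Wm_mono] U_neg[OF lam_pos] by (simp add: mult_pos_neg)
    show "0 \<le> - (h_minus Wm N j * U alpha beta lam (wm j))" if "j \<in> {1..nm}" for j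
      using that assms h_minus_pos[OF Wm_mono, of j N] U_nonpos[of lam "wm j"] lam_pos
      by (simp add: loss_profile_def mult_nonneg_nonpos)
  qed simp
  then show ?thesis
    by (simp add: loss_value_def sum_negf)
qed

lemma loss_value_le_floor:
  assumes "loss_profile wmin nm wm" "nm \<le> N"
  shows "loss_value nm wm \<le> loss_value nm (stretch_losses wmin 0 wm)"
  unfolding loss_value_def
proof (intro sum_mono mult_left_mono)
  fix i assume "i \<in> {1..nm}"
  then show "U alpha beta lam (wm i) \<le> U alpha beta lam (stretch_losses wmin 0 wm i)"
    "0 \<le> h_minus Wm N i"
    using assms h_minus_pos[OF Wm_mono, of i N] U_nonpos[of lam "wm i"] lam_pos
    by (auto simp: loss_profile_def stretch_losses_def)
qed

lemma loss_value_stretch: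
  assumes "loss_profile wmin nm wm" "0 \<le> T"
  shows "loss_value nm (stretch_losses wmin T wm)
    = (1 - T powr beta) * loss_value nm (stretch_losses wmin 0 wm) + T powr beta * loss_value nm wm"
proof -
  have pointwise: "U alpha beta lam (stretch_losses wmin T wm i)
      = (1 - T powr beta) * U alpha beta lam (stretch_losses wmin 0 wm i)
        + T powr beta * U alpha beta lam (wm i)" if "i \<in> {1..nm}" for i
    using that assms U_mult_nonpos[of T "wm i"]
    by (auto simp: loss_profile_def stretch_losses_def algebra_simps)
  then have "loss_value nm (stretch_losses wmin T wm)
    = (\<Sum>i=1..nm. (1 - T powr beta) * (h_minus Wm N i * U alpha beta lam (stretch_losses wmin 0 wm i))
        + T powr beta * (h_minus Wm N i * U alpha beta lam (wm i)))"
    unfolding loss_value_def by (intro sum.cong refl) (subst pointwise; simp add: algebra_simps)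
  then show ?thesis
    by (simp add: loss_value_def sum.distrib sum_distrib_left)
qed

lemma loss_value_Suc: "wm (Suc m) = 0 \<Longrightarrow> loss_value (Suc m) wm = loss_value m wm"
  by (simp add: loss_value_def)

lemma gain_value_nonneg: "gain_profile np wp \<Longrightarrow> np \<le> N \<Longrightarrow> 0 \<le> gain_value np wp"
  unfolding gain_value_def gain_profile_def
  by (intro sum_nonneg mult_nonneg_nonneg less_imp_le[OF h_plus_pos[OF Wp_mono]] U_nonneg) auto

lemma gain_value_mult:
  "gain_profile np wp \<Longrightarrow> 0 \<le> c \<Longrightarrow> gain_value np (\<lambda>j. c * wp j) = c powr alpha * gain_value np wp"
  by (auto simp: gain_value_def gain_profile_def sum_distrib_left U_mult_nonneg intro!: sum.cong)

lemma gain_value_prepend_zero: "gain_value (Suc np) (prepend_zero wp) = gain_value np wp"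
  unfolding gain_value_def sum_atLeast1_atMost_Suc by (simp add: prepend_zero_def)

lemma feasible_prepend_zero:
  "feasible_at (Suc m) np wm wp \<Longrightarrow> wm (Suc m) = 0 \<Longrightarrow> feasible_at m (Suc np) wm (prepend_zero wp)"
  by (simp add: feasible_iff loss_value_Suc gain_value_prepend_zero loss_profile_Suc
      gain_profile_prepend_zero)

lemma sum_gains_pos:
  assumes v: "gain_profile np v" and "0 < gain_value np v"
  shows "0 < (\<Sum>j=1..np. v j)"
proof (rule ccontr)
  have v_nonneg: "\<forall>j\<in>{1..np}. 0 \<le> v j"
    using v by (simp add: gain_profile_def)
  assume "\<not> 0 < (\<Sum>j=1..np. v j)"
  moreover have "0 \<le> (\<Sum>j=1..np. v j)"
    using v_nonneg by (intro sum_nonneg) auto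
  ultimately have "\<forall>j\<in>{1..np}. v j = 0"
    using v_nonneg sum_nonneg_eq_0_iff[of "{1..np}" v] by simp
  with \<open>0 < gain_value np v\<close> show False
    by (simp add: gain_value_def)
qed

lemma gain_value_max_scaled_ge:
  assumes v: "gain_profile np v" "v 1 = 0" and "1 \<le> np" "np \<le> N"
    and d: "0 \<le> d" "d \<le> 1" and "0 \<le> e"
  shows "h_plus Wp N np 1 * e powr alpha + (1 - d) * gain_value np v
    \<le> gain_value np (\<lambda>j. max e ((1 - d) * v j))"
proof -
  let ?h = "h_plus Wp N np" and ?U = "U alpha beta lam"
  have "(if j = 1 then ?h 1 * e powr alpha else 0) + (1 - d) * (?h j * ?U (v j))
      \<le> ?h j * ?U (max e ((1 - d) * v j))" if j: "j \<in> {1..np}" for j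
  proof (cases "j = 1")
    case True
    with v \<open>0 \<le> e\<close> show ?thesis
      by (simp add: U_def)
  next
    case False
    have "0 \<le> v j"
      using v j by (simp add: gain_profile_def)
    then have "(1 - d) * ?U (v j) \<le> ?U ((1 - d) * v j)"
      using U_mult_ge alpha_pos alpha_lt_1 d by simp
    also have "\<dots> \<le> ?U (max e ((1 - d) * v j))"
      using U_mono_nonneg[OF alpha_pos] d \<open>0 \<le> v j\<close> by simp
    finally show ?thesis
      using False h_plus_pos[OF Wp_mono, of j np N] j \<open>np \<le> N\<close>
      by (simp add: mult.left_commute mult_left_mono)
  qed
  then have "(\<Sum>j=1..np. (if j = 1 then ?h 1 * e powr alpha else 0) + (1 - d) * (?h j * ?U (v j)))
      \<le> gain_value np (\<lambda>j. max e ((1 - d) * v j))"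
    unfolding gain_value_def by (rule sum_mono)
  then show ?thesis
    using \<open>1 \<le> np\<close> by (simp add: gain_value_def sum.distrib sum_distrib_left)
qed

lemma cheaper_gains_if_first_gain_zero:
  assumes v: "gain_profile np v" "v 1 = 0" and G_pos: "0 < gain_value np v" and "np \<le> N"
  obtains v' where "gain_profile np v'" "gain_value np v \<le> gain_value np v'"
    "(\<Sum>j=1..np. v' j) < (\<Sum>j=1..np. v j)"
proof -
  define G S h1 where "G = gain_value np v" and "S = (\<Sum>j=1..np. v j)" and "h1 = h_plus Wp N np 1"
  have "1 \<le> np"
    using G_pos by (cases np) (auto simp: gain_value_def)
  then have "0 < h1" "0 < S" "0 < G"
    using h_plus_pos[OF Wp_mono] sum_gains_pos v G_pos \<open>np \<le> N\<close> by (simp_all add: G_def S_def h1_def)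
  \<comment> \<open>A small first gain e costs e but is worth e powr alpha, which is much larger.\<close>
  then obtain e where e: "0 < e" "e powr alpha \<le> G / h1" "e < h1 * S / (np * G) * e powr alpha"
    using exists_powr_dominating[OF alpha_pos alpha_lt_1, of "G / h1" "h1 * S / (np * G)"]
      \<open>1 \<le> np\<close> by auto
  define d where "d = h1 * e powr alpha / G"
  have "h1 * e powr alpha \<le> G"
    using e(2) \<open>0 < h1\<close> by (simp add: le_divide_eq mult.commute)
  then have d: "0 \<le> d" "d \<le> 1"
    using \<open>0 < h1\<close> \<open>0 < G\<close> by (simp_all add: d_def)
  define v' where "v' = (\<lambda>j. max e ((1 - d) * v j))"
  have "gain_profile np v'"
    using gain_profile_max_scaled v(1) e(1) d by (simp add: v'_def)
  moreover have "h1 * e powr alpha + (1 - d) * G = G"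
    using \<open>0 < G\<close> by (simp add: d_def algebra_simps)
  then have "G \<le> gain_value np v'"
    using gain_value_max_scaled_ge[OF v \<open>1 \<le> np\<close> \<open>np \<le> N\<close> d, of e] e(1)
    by (simp add: G_def h1_def v'_def)
  moreover have "(\<Sum>j=1..np. v' j) < S"
  proof -
    have "real np * e < real np * (h1 * S / (np * G) * e powr alpha)"
      using e(3) \<open>1 \<le> np\<close> by (intro mult_strict_left_mono) auto
    also have "\<dots> = d * S"
      using \<open>1 \<le> np\<close> by (simp add: d_def)
    finally have "real np * e < d * S" .
    have "(\<Sum>j=1..np. v' j) \<le> real np * e + (1 - d) * S"
      using sum_max_scaled_le[of np v e d] e d v(1) by (simp add: v'_def S_def gain_profile_def)
    also have "\<dots> < S"
      using \<open>real np * e < d * S\<close> by (simp add: algebra_simps)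
    finally show ?thesis .
  qed
  ultimately show ?thesis
    using that by (simp add: G_def S_def)
qed

lemma feasible_improvable_if_first_gain_zero:
  assumes "feasible_at nm np wm v" "v 1 = 0" "loss_value nm wm < 0" "np \<le> N"
  obtains v' where "feasible_at nm np wm v'" "objective nm np wm v < objective nm np wm v'"
proof -
  have "gain_profile np v" "0 < gain_value np v"
    using assms by (auto simp: feasible_iff)
  then obtain v' where "gain_profile np v'" "gain_value np v \<le> gain_value np v'"
    "(\<Sum>j=1..np. v' j) < (\<Sum>j=1..np. v j)"
    using cheaper_gains_if_first_gain_zero \<open>v 1 = 0\<close> \<open>np \<le> N\<close> by metis
  with assms show ?thesis
    by (intro that[of v']) (auto simp: feasible_iff objective_def)
qed

lemma zero_loss_better_as_gain:
  assumes feas: "feasible_at (Suc m) np wm wp" and last_zero: "wm (Suc m) = 0"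
    and k: "k \<in> {1..m}" "wm k < 0" and "Suc m + np \<le> N"
  obtains v where "feasible_at m (Suc np) wm v"
    "objective (Suc m) np wm wp < objective m (Suc np) wm v"
proof -
  have feas1: "feasible_at m (Suc np) wm (prepend_zero wp)"
    using feasible_prepend_zero feas last_zero by simp
  moreover have "prepend_zero wp 1 = 0"
    by (simp add: prepend_zero_def)
  moreover have "loss_value m wm < 0"
    using feas1 k \<open>Suc m + np \<le> N\<close> by (intro loss_value_neg) (auto simp: feasible_iff)
  moreover have "Suc np \<le> N"
    using \<open>Suc m + np \<le> N\<close> by simp
  ultimately obtain v where "feasible_at m (Suc np) wm v"
    "objective m (Suc np) wm (prepend_zero wp) < objective m (Suc np) wm v"
    using feasible_improvable_if_first_gain_zero by metis
  with objective_prepend_zero[of wm m np wp] last_zero show ?thesis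
    using that by simp
qed

lemma feasible_stretch:
  assumes "beta \<le> alpha" and feas: "feasible_at nm np wm wp" and "np \<le> N"
    and u: "0 \<le> u" "u \<le> 1" "u powr alpha * gain_value np wp = - loss_value nm (stretch_losses wmin 0 wm)"
    and T: "1 \<le> T" "\<forall>i\<in>{1..nm}. wm i \<noteq> wmin \<longrightarrow> wmin \<le> T * wm i"
  shows "feasible_at nm np (stretch_losses wmin T wm) (\<lambda>j. (T - (T - 1) * u) * wp j)"
proof -
  define c where "c = T - (T - 1) * u"
  define K L G where "K = loss_value nm (stretch_losses wmin 0 wm)"
    and "L = loss_value nm wm" and "G = gain_value np wp"
  have prof: "loss_profile wmin nm wm" "gain_profile np wp" and "0 \<le> L + G"
    using feas by (auto simp: feasible_iff L_def G_def)
  have "0 \<le> G"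
    using gain_value_nonneg prof \<open>np \<le> N\<close> by (simp add: G_def)
  have "0 \<le> (T - 1) * (1 - u)"
    using T u by simp
  then have "1 \<le> c"
    by (simp add: c_def algebra_simps)
  have "u powr alpha + T powr beta * (1 - u powr alpha) \<le> c powr alpha"
    unfolding c_def using alpha_pos alpha_lt_1 assms(1) u T by (intro powr_mix_le) auto
  then have "(u powr alpha + T powr beta * (1 - u powr alpha)) * G \<le> c powr alpha * G"
    using \<open>0 \<le> G\<close> by (rule mult_right_mono)
  moreover have "T powr beta * (- G) \<le> T powr beta * L"
    using \<open>0 \<le> L + G\<close> by (intro mult_left_mono) auto
  moreover have "(1 - T powr beta) * K = - (u powr alpha * G) + T powr beta * (u powr alpha * G)"
    using u(3) by (simp add: K_def G_def algebra_simps)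
  ultimately have "0 \<le> (1 - T powr beta) * K + T powr beta * L + c powr alpha * G"
    by (simp add: algebra_simps)
  also have "\<dots> = loss_value nm (stretch_losses wmin T wm) + gain_value np (\<lambda>j. c * wp j)"
    using T \<open>1 \<le> c\<close> loss_value_stretch[OF prof(1), of T] gain_value_mult[OF prof(2), of c]
    by (simp add: K_def L_def G_def)
  finally show ?thesis
    using loss_profile_stretch[OF prof(1) _ T(2)] gain_profile_mult[OF prof(2)] T \<open>1 \<le> c\<close>
    by (simp add: feasible_iff c_def)
qed

lemma floor_losses_no_worse:
  assumes "beta \<le> alpha" and opt: "is_optimum alpha beta lam Wm Wp N wmin nm np wm wp"
    and "nm + np \<le> N"
  obtains u where "0 \<le> u" "feasible_at nm np (stretch_losses wmin 0 wm) (\<lambda>j. u * wp j)"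
    "objective nm np wm wp \<le> objective nm np (stretch_losses wmin 0 wm) (\<lambda>j. u * wp j)"
proof -
  define w0 where "w0 = stretch_losses wmin 0 wm"
  have feas: "feasible_at nm np wm wp"
    and best: "\<And>vm vp. feasible_at nm np vm vp \<Longrightarrow> objective nm np vm vp \<le> objective nm np wm wp"
    using opt by (auto simp: is_optimum_def)
  then have prof: "loss_profile wmin nm wm" "gain_profile np wp"
    and "0 \<le> loss_value nm wm + gain_value np wp"
    by (auto simp: feasible_iff)
  moreover have "loss_profile wmin nm w0"
    using loss_profile_stretch[OF prof(1), of 0] wmin_neg by (simp add: w0_def)
  ultimately have "0 \<le> - loss_value nm w0" "- loss_value nm w0 \<le> gain_value np wp"
    using loss_value_nonpos loss_value_le_floor \<open>nm + np \<le> N\<close> by (force simp: w0_def)+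
  then obtain u where u: "0 \<le> u" "u \<le> 1" "u powr alpha * gain_value np wp = - loss_value nm w0"
    using exists_powr_mult_eq alpha_pos by metis
  have feas0: "feasible_at nm np w0 (\<lambda>j. u * wp j)"
    using u prof \<open>loss_profile wmin nm w0\<close> by (simp add: feasible_iff gain_value_mult gain_profile_mult)
  obtain T where T: "1 < T" "\<forall>i\<in>{1..nm}. wm i \<noteq> wmin \<longrightarrow> wmin \<le> T * wm i"
    using loss_profile_stretchable[OF prof(1)] by blast
  \<comment> \<open>The optimum is an interior point of a feasible segment on which the objective is affine.\<close>
  define OT where "OT = objective nm np (stretch_losses wmin T wm) (\<lambda>j. (T - (T - 1) * u) * wp j)"
  have "(\<lambda>j. (T - (T - 1) * u) * wp j) = (\<lambda>j. (1 - T) * (u * wp j) + T * wp j)"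
    by (simp add: fun_eq_iff algebra_simps)
  then have "OT = (1 - T) * objective nm np w0 (\<lambda>j. u * wp j) + T * objective nm np wm wp"
    unfolding OT_def stretch_losses_affine[of wmin T] w0_def by (simp only: objective_linear)
  moreover have "OT \<le> objective nm np wm wp"
    unfolding OT_def using T u \<open>nm + np \<le> N\<close> assms(1) feas
    by (intro best feasible_stretch) (auto simp: w0_def)
  ultimately have "(T - 1) * objective nm np wm wp \<le> (T - 1) * objective nm np w0 (\<lambda>j. u * wp j)"
    by (simp add: algebra_simps)
  then have "objective nm np wm wp \<le> objective nm np w0 (\<lambda>j. u * wp j)"
    using T by simp
  with u feas0 show ?thesis
    using that by (simp add: w0_def)
qed

lemma optimum_improvable_by_moving_ticket:
  assumes "beta \<le> alpha" and opt: "is_optimum alpha beta lam Wm Wp N wmin nm np wm wp"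
    and "nm + np \<le> N" and "0 < objective nm np wm wp"
    and i: "i \<in> {1..nm}" "wm i \<noteq> wmin"
  obtains m vm vp where "nm = Suc m" "m \<noteq> 0" "feasible_at m (Suc np) vm vp"
    "objective nm np wm wp < objective m (Suc np) vm vp"
proof -
  define w0 where "w0 = stretch_losses wmin 0 wm"
  obtain u where "0 \<le> u" and feas0: "feasible_at nm np w0 (\<lambda>j. u * wp j)"
    and better: "objective nm np wm wp \<le> objective nm np w0 (\<lambda>j. u * wp j)"
    using floor_losses_no_worse[OF assms(1-3)] unfolding w0_def by blast
  have prof: "loss_profile wmin nm wm" "gain_profile np wp"
    using opt by (auto simp: is_optimum_def feasible_iff)
  have "wmin < wm nm"
    using i loss_profile_mono[OF prof(1), of i nm] prof(1) by (force simp: loss_profile_def)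
  then have last_zero: "w0 nm = 0"
    by (simp add: w0_def stretch_losses_def)
  have "\<exists>k\<in>{1..nm}. w0 k < 0"
  proof (rule ccontr)
    assume "\<not> ?thesis"
    then have "\<forall>k\<in>{1..nm}. w0 k = 0"
      using wmin_neg by (auto simp: w0_def stretch_losses_def)
    moreover have "0 \<le> (\<Sum>j=1..np. u * wp j)"
      using \<open>0 \<le> u\<close> prof(2) by (intro sum_nonneg) (auto simp: gain_profile_def)
    ultimately have "objective nm np w0 (\<lambda>j. u * wp j) \<le> 0"
      by (simp add: objective_def)
    with better \<open>0 < objective nm np wm wp\<close> show False
      by simp
  qed
  then obtain k m where "k \<in> {1..m}" "w0 k < 0" and m: "nm = Suc m"
    using last_zero by (cases nm) (auto simp: le_Suc_eq)
  then obtain vp where "feasible_at m (Suc np) w0 vp"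
    "objective nm np w0 (\<lambda>j. u * wp j) < objective m (Suc np) w0 vp"
    using zero_loss_better_as_gain feas0 last_zero \<open>nm + np \<le> N\<close> by metis
  with better m \<open>k \<in> {1..m}\<close> show ?thesis
    using that by fastforce
qed

end

theorem proposition5:
  fixes alpha beta lam wmin :: real and N :: nat and Wm Wp :: "real \<Rightarrow> real"
    and nm_opt np_opt :: nat and wm wp :: "nat \<Rightarrow> real"
  assumes N_pos: "N \<ge> 1"
    and price: "- wmin > 0"
    and alpha_bd: "0 < alpha" "alpha < 1"
    and beta_bd: "0 < beta" "beta < 1"
    and lam_pos: "lam > 0"
    and alpha_ge_beta: "alpha \<ge> beta"
    and Wp_S: "inverse_S_shaped Wp" and Wp_range: "\<forall>x\<in>{0..1}. Wp x \<in> {0..1}"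
    and Wp0: "Wp 0 = 0" and Wp1: "Wp 1 = 1"
    and Wm_S: "inverse_S_shaped Wm" and Wm_range: "\<forall>x\<in>{0..1}. Wm x \<in> {0..1}"
    and Wm0: "Wm 0 = 0" and Wm1: "Wm 1 = 1"
    and n_sum: "nm_opt + np_opt = N"
    and n_opt: "\<forall>nm np. nm + np = N \<longrightarrow>
                  Phi alpha beta lam Wm Wp N wmin nm np \<le> Phi alpha beta lam Wm Wp N wmin nm_opt np_opt"
    and pos: "Phi alpha beta lam Wm Wp N wmin nm_opt np_opt > 0"
    and w_opt: "is_optimum alpha beta lam Wm Wp N wmin nm_opt np_opt wm wp"
  shows "\<forall>i\<in>{1..nm_opt}. wm i = wmin"
proof (rule ccontr)
  assume "\<not> ?thesis"
  then obtain i where i: "i \<in> {1..nm_opt}" "wm i \<noteq> wmin"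
    by blast
  interpret prospect_lottery alpha beta lam Wm Wp N wmin
    using alpha_bd lam_pos Wm_S Wp_S price by unfold_locales (auto simp: inverse_S_shaped_def)
  have "nm_opt \<noteq> 0" "np_opt \<noteq> 0"
    using pos by (auto simp: Phi_def split: if_splits)
  then have Phi_opt: "Phi alpha beta lam Wm Wp N wmin nm_opt np_opt = objective nm_opt np_opt wm wp"
    using Phi_eq_objective w_opt by blast
  obtain m vm vp where "nm_opt = Suc m" "m \<noteq> 0" "feasible_at m (Suc np_opt) vm vp"
    "objective nm_opt np_opt wm wp < objective m (Suc np_opt) vm vp"
    using optimum_improvable_by_moving_ticket[OF alpha_ge_beta w_opt _ _ i] n_sum pos Phi_opt
    by (metis order.refl)
  then have "Phi alpha beta lam Wm Wp N wmin nm_opt np_opt < Phi alpha beta lam Wm Wp N wmin m (Suc np_opt)"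
    using objective_le_Phi[of alpha beta lam Wm Wp N wmin m "Suc np_opt" vm vp] Phi_opt by simp
  moreover have "m + Suc np_opt = N"
    using n_sum \<open>nm_opt = Suc m\<close> by simp
  ultimately show False
    using n_opt by fastforce
qed

end
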